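(* Fix an integer $L\ge1$, $\alpha>2$ and $\gamma>0$, and let $\Delta=\pi\,\frac{2}{\alpha}\,\Gamma(2/\alpha)\,\Gamma(1-2/\alpha)$. For $\lambda\ge 0$ define $$F(\gamma,\lambda)=1-\sum_{i=0}^{L-1}\frac{(\lambda\Delta\gamma^{2/\alpha})^i}{i!}\exp\!\left(-\lambda\Delta\gamma^{2/\alpha}\right)$$ (the outage probability of the optimum combining receiver with $L$ antennas in a Poisson field of interferers of density $\lambda$ with Rayleigh fading, in the interference-limited regime $\sigma^2=0$, with normalized threshold $\gamma$). Let $$\lambda_{\max}=\arg\max_{0\le\lambda<\infty}\lambda\bigl(1-F(\gamma,\lambda)\bigr).$$ Then $$\lambda_{\max}=\frac{g(L)}{\Delta\gamma^{2/\alpha}},$$ where $g(L)$ is the positive root of the polynomial $$Q(t)=\sum_{i=0}^{L-1}\frac{t^i}{i!}-\frac{t^L}{(L-1)!},$$ and this root satisfies $\frac{L}{2}\le g(L)\le L$. Moreover, the maximal spatial throughput is $$T_{\max}=\lambda_{\max}\bigl(1-F(\gamma,\lambda_{\max})\bigr)=\frac{g(L)^{L+1}}{(L-1)!\,\Delta\gamma^{2/\alpha}}\exp(-g(L)).$$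
   Context: $\Gamma(\cdot)$ denotes the Gamma function. The quantity $\lambda(1-F(\gamma,\lambda))$ is the spatial throughput (mean number of successful transmissions per unit area) of a single-hop ALOHA network with contention density $\lambda$. *)

theory Defs
  imports "HOL-Analysis.Analysis"
begin

definition Delta :: "real \<Rightarrow> real" where
  "Delta alpha = pi * (2 / alpha) * Gamma (2 / alpha) * Gamma (1 - 2 / alpha)"

definition outage :: "nat \<Rightarrow> real \<Rightarrow> real \<Rightarrow> real \<Rightarrow> real" where
  "outage L alpha gamma lambda =
     1 - (\<Sum>i<L. (lambda * Delta alpha * gamma powr (2 / alpha)) ^ i / fact i)
           * exp (- (lambda * Delta alpha * gamma powr (2 / alpha)))"

definition throughput :: "nat \<Rightarrow> real \<Rightarrow> real \<Rightarrow> real \<Rightarrow> real" where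
  "throughput L alpha gamma lambda = lambda * (1 - outage L alpha gamma lambda)"

definition Qpoly :: "nat \<Rightarrow> real \<Rightarrow> real" where
  "Qpoly L t = (\<Sum>i<L. t ^ i / fact i) - t ^ L / fact (L - 1)"

end

theory Submission
  imports Defs
begin

text \<open>
  In the normalized load x = lambda Delta gamma^(2/alpha) the throughput is
  h(x) / (Delta gamma^(2/alpha)) with h(x) = x S(x) exp(-x), S(x) = sum_{i<L} x^i/i!,
  and h'(x) = exp(-x) Q(x). Since Q(x)/x^L is a sum of negative powers of x minus a
  constant, it is strictly decreasing, so Q has a single positive root g, is positive
  before it and negative after it, and g is the unique maximiser of h on [0, oo).
  The bounds L/2 <= g <= L follow from Q(L) <= 0 <= Q(L/2): the terms L^i/i! increase
  up to i = L - 1, while each of the last floor(L/2) + 1 terms (L/2)^i/i! dominates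
  (L/2)^(L-1)/(L-1)!.
\<close>

lemma power_div_fact_Suc:
  fixes x :: real
  shows "x ^ Suc j / fact (Suc j) = x ^ j / fact j * (x / real (Suc j))"
  by (simp add: field_simps)

lemma power_div_fact_mono:
  fixes x :: real
  assumes "real m \<le> x" "i \<le> m"
  shows "x ^ i / fact i \<le> x ^ m / fact m"
  using assms(2)
proof (induction i rule: inc_induct)
  case (step n)
  have "x / real (Suc n) \<ge> 1" and "x ^ n / fact n \<ge> 0"
    using step(2) assms(1) of_nat_mono[of "Suc n" m] by auto
  then have "x ^ n / fact n * 1 \<le> x ^ n / fact n * (x / real (Suc n))"
    by (rule mult_left_mono)
  with step.IH show ?case unfolding power_div_fact_Suc by linarith
qed simp

lemma power_div_fact_antimono:
  fixes x :: real
  assumes "0 \<le> x" "x \<le> real (Suc i)" "i \<le> m"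
  shows "x ^ m / fact m \<le> x ^ i / fact i"
  using assms(3)
proof (induction m rule: dec_induct)
  case (step n)
  have "x / real (Suc n) \<le> 1"
    using step(1) assms(2) of_nat_mono[of "Suc i" "Suc n"] by (simp add: field_simps)
  then have "x ^ n / fact n * (x / real (Suc n)) \<le> x ^ n / fact n"
    by (rule mult_left_le) (use assms(1) in simp)
  with step.IH show ?case unfolding power_div_fact_Suc by linarith
qed simp

lemma Qpoly_Suc: "Qpoly (Suc m) t = (\<Sum>i<Suc m. t ^ i / fact i) - t * (t ^ m / fact m)"
  by (simp add: Qpoly_def)

lemma Qpoly_nonpos_at_degree: "Qpoly (Suc m) (real (Suc m)) \<le> 0"
proof -
  let ?x = "real (Suc m)"
  have "(\<Sum>i<Suc m. ?x ^ i / fact i) \<le> (\<Sum>i<Suc m. ?x ^ m / fact m)"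
    by (intro sum_mono power_div_fact_mono) auto
  then show ?thesis unfolding Qpoly_Suc by simp
qed

lemma Qpoly_nonneg_at_half_degree: "Qpoly (Suc m) (real (Suc m) / 2) \<ge> 0"
proof -
  let ?x = "real (Suc m) / 2"
  define k where "k = Suc m div 2"
  have "real (Suc k) * (?x ^ m / fact m) = (\<Sum>i\<in>{m - k..m}. ?x ^ m / fact m)"
    by (simp add: k_def Suc_diff_le)
  also have "\<dots> \<le> (\<Sum>i\<in>{m - k..m}. ?x ^ i / fact i)"
    by (intro sum_mono power_div_fact_antimono) (auto simp: k_def)
  also have "\<dots> \<le> (\<Sum>i<Suc m. ?x ^ i / fact i)"
    by (intro sum_mono2) auto
  finally have "real (Suc k) * (?x ^ m / fact m) \<le> (\<Sum>i<Suc m. ?x ^ i / fact i)" .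
  moreover have "Suc m \<le> 2 * Suc k"
    unfolding k_def by presburger
  then have "real (Suc m) \<le> real (2 * Suc k)"
    by (simp only: of_nat_le_iff)
  then have "?x \<le> real (Suc k)"
    by simp
  then have "?x * (?x ^ m / fact m) \<le> real (Suc k) * (?x ^ m / fact m)"
    by (intro mult_right_mono) auto
  ultimately show ?thesis unfolding Qpoly_Suc by linarith
qed

lemma Qpoly_root_between_half_degree_and_degree:
  obtains g where "real (Suc m) / 2 \<le> g" "g \<le> real (Suc m)" "Qpoly (Suc m) g = 0"
proof -
  have "continuous_on {real (Suc m) / 2 .. real (Suc m)} (Qpoly (Suc m))"
    unfolding Qpoly_def by (intro continuous_intros) auto
  from IVT2'[OF Qpoly_nonpos_at_degree Qpoly_nonneg_at_half_degree _ this] that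
  show ?thesis by auto
qed

lemma Qpoly_div_power:
  fixes x :: real
  assumes "x > 0"
  shows "Qpoly (Suc m) x / x ^ Suc m
           = (\<Sum>i<Suc m. inverse (fact i * x ^ (Suc m - i))) - inverse (fact m)"
proof -
  have "x ^ i / fact i / x ^ Suc m = inverse (fact i * x ^ (Suc m - i))" if "i < Suc m" for i
  proof -
    have "x ^ Suc m = x ^ i * x ^ (Suc m - i)"
      using that by (simp flip: power_add)
    then show ?thesis using assms by (simp add: field_simps)
  qed
  then show ?thesis
    using assms unfolding Qpoly_Suc diff_divide_distrib sum_divide_distrib
    by (simp add: field_simps)
qed

lemma Qpoly_div_power_strict_antimono:
  fixes x y :: real
  assumes "0 < x" "x < y"
  shows "Qpoly (Suc m) y / y ^ Suc m < Qpoly (Suc m) x / x ^ Suc m"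
proof -
  have term_less: "inverse (fact i * y ^ (Suc m - i)) < inverse (fact i * x ^ (Suc m - i))"
    if "i < Suc m" for i
  proof -
    have "x ^ (Suc m - i) < y ^ (Suc m - i)"
      using that assms by (intro power_strict_mono) auto
    then show ?thesis
      using assms by (intro less_imp_inverse_less) auto
  qed
  have "0 < y"
    using assms by simp
  then show ?thesis
    unfolding Qpoly_div_power[OF assms(1)] Qpoly_div_power[OF \<open>0 < y\<close>]
    by (intro diff_strict_right_mono sum_strict_mono term_less) auto
qed

lemma Qpoly_pos_below_root:
  assumes "0 < x" "x < g" "Qpoly (Suc m) g = 0"
  shows "Qpoly (Suc m) x > 0"
proof -
  have "Qpoly (Suc m) x / x ^ Suc m > 0"
    using Qpoly_div_power_strict_antimono[OF assms(1,2), of m] assms(3) by simp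
  moreover have "x ^ Suc m > 0"
    using assms(1) by simp
  ultimately show ?thesis by (simp add: zero_less_divide_iff)
qed

lemma Qpoly_neg_above_root:
  assumes "0 < g" "g < x" "Qpoly (Suc m) g = 0"
  shows "Qpoly (Suc m) x < 0"
proof -
  have "Qpoly (Suc m) x / x ^ Suc m < 0"
    using Qpoly_div_power_strict_antimono[OF assms(1,2), of m] assms(3) by simp
  moreover have "x ^ Suc m > 0"
    using assms(1,2) by simp
  ultimately show ?thesis by (simp add: divide_less_0_iff)
qed

lemma Qpoly_positive_root_unique:
  assumes "0 < g" "Qpoly (Suc m) g = 0" "0 < t" "Qpoly (Suc m) t = 0"
  shows "t = g"
  using Qpoly_pos_below_root[of t g m] Qpoly_neg_above_root[of g t m] assms
  by (cases t g rule: linorder_cases) auto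

lemma has_real_derivative_exp_partial_sum:
  "((\<lambda>x. \<Sum>i<Suc n. x ^ i / fact i) has_real_derivative (\<Sum>i<n. x ^ i / fact i)) (at x)"
proof (induction n)
  case (Suc n)
  have "((\<lambda>x. x ^ Suc n / fact (Suc n)) has_real_derivative x ^ n / fact n) (at x)"
    using DERIV_cdivide[OF DERIV_pow[of "Suc n" x], of "fact (Suc n)"]
    by (simp del: of_nat_Suc)
  from DERIV_add[OF Suc this] show ?case by simp
qed simp

definition normalized_throughput :: "nat \<Rightarrow> real \<Rightarrow> real" where
  "normalized_throughput L x = x * (\<Sum>i<L. x ^ i / fact i) * exp (- x)"

lemma has_real_derivative_normalized_throughput:
  "(normalized_throughput (Suc m) has_real_derivative exp (- x) * Qpoly (Suc m) x) (at x)"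
  unfolding normalized_throughput_def
  by (rule derivative_eq_intros has_real_derivative_exp_partial_sum refl)+
     (simp add: Qpoly_Suc algebra_simps)

lemma normalized_throughput_at_root:
  assumes "Qpoly (Suc m) g = 0"
  shows "normalized_throughput (Suc m) g = g ^ (Suc m + 1) / fact m * exp (- g)"
proof -
  have "(\<Sum>i<Suc m. g ^ i / fact i) = g * (g ^ m / fact m)"
    using assms unfolding Qpoly_Suc by simp
  then show ?thesis
    unfolding normalized_throughput_def by simp
qed

lemma DERIV_sign_change_imp_strict_max:
  fixes f f' :: "real \<Rightarrow> real"
  assumes "\<And>x. (f has_real_derivative f' x) (at x)"
    and "\<And>x. a < x \<Longrightarrow> x < g \<Longrightarrow> f' x > 0"
    and "\<And>x. g < x \<Longrightarrow> f' x < 0"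
    and "a \<le> x" "x \<noteq> g"
  shows "f x < f g"
proof (cases "x < g")
  case True
  with MVT2[OF True assms(1)] obtain z where z: "x < z" "z < g" "f g - f x = (g - x) * f' z"
    by blast
  have "f' z > 0"
    using assms(2,4) z by simp
  with True have "(g - x) * f' z > 0" by simp
  with z(3) show ?thesis by linarith
next
  case False
  with assms(5) have "g < x" by simp
  with MVT2[OF this assms(1)] obtain z where z: "g < z" "z < x" "f x - f g = (x - g) * f' z"
    by blast
  have "f' z < 0"
    using assms(3) z by simp
  with \<open>g < x\<close> have "(x - g) * f' z < 0" by (simp add: mult_pos_neg)
  with z(3) show ?thesis by linarith
qed

lemma normalized_throughput_strict_max:
  assumes "0 < g" "Qpoly (Suc m) g = 0" "0 \<le> x" "x \<noteq> g"
  shows "normalized_throughput (Suc m) x < normalized_throughput (Suc m) g"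
  using assms
  by (intro DERIV_sign_change_imp_strict_max[OF has_real_derivative_normalized_throughput, of 0])
     (auto intro!: mult_pos_pos mult_pos_neg Qpoly_pos_below_root Qpoly_neg_above_root)

lemma Delta_pos:
  assumes "alpha > 2"
  shows "Delta alpha > 0"
  using assms unfolding Delta_def by (simp add: Gamma_real_pos)

lemma throughput_eq_normalized_throughput:
  assumes "c = Delta alpha * gamma powr (2 / alpha)" "c > 0"
  shows "throughput L alpha gamma lambda = normalized_throughput L (lambda * c) / c"
proof -
  have load: "lambda * Delta alpha * gamma powr (2 / alpha) = lambda * c"
    using assms(1) by (simp add: mult.assoc)
  show ?thesis
    using assms(2) unfolding throughput_def outage_def normalized_throughput_def load by simp
qed

theorem corollary1:
  fixes L :: nat and alpha gamma :: real
  assumes "L \<ge> 1" and "alpha > 2" and "gamma > 0"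
  shows "\<exists>g::real. g > 0 \<and> Qpoly L g = 0
           \<and> (\<forall>t>0. Qpoly L t = 0 \<longrightarrow> t = g)
           \<and> real L / 2 \<le> g \<and> g \<le> real L
           \<and> (let lmax = g / (Delta alpha * gamma powr (2 / alpha)) in
                (\<forall>lambda\<ge>0. lambda \<noteq> lmax \<longrightarrow>
                    throughput L alpha gamma lambda < throughput L alpha gamma lmax)
                \<and> throughput L alpha gamma lmax
                    = g ^ (L + 1) / (fact (L - 1) * Delta alpha * gamma powr (2 / alpha))
                      * exp (- g))"
proof -
  obtain m where L: "L = Suc m" using assms(1) by (cases L) auto
  define c where "c = Delta alpha * gamma powr (2 / alpha)"
  have "c > 0" unfolding c_def using Delta_pos[OF assms(2)] assms(3) by simp
  have T: "throughput L alpha gamma l = normalized_throughput L (l * c) / c" for l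
    by (rule throughput_eq_normalized_throughput[OF c_def \<open>c > 0\<close>])
  have gc: "g / c * c = g" for g
    using \<open>c > 0\<close> by simp
  obtain g where g: "real L / 2 \<le> g" "g \<le> real L" "Qpoly L g = 0"
    using Qpoly_root_between_half_degree_and_degree unfolding L by blast
  have "real L / 2 > 0"
    using assms(1) by simp
  with g(1) have "g > 0" by linarith
  have "throughput L alpha gamma l < throughput L alpha gamma (g / c)"
    if "l \<ge> 0" "l \<noteq> g / c" for l
  proof -
    have "l * c \<noteq> g"
      using that(2) \<open>c > 0\<close> by (auto simp: field_simps)
    with that(1) \<open>c > 0\<close> have "normalized_throughput L (l * c) < normalized_throughput L g"
      unfolding L by (intro normalized_throughput_strict_max \<open>g > 0\<close> g(3)[unfolded L]) auto
    then show ?thesis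
      unfolding T gc using \<open>c > 0\<close> by (rule divide_strict_right_mono)
  qed
  moreover have "throughput L alpha gamma (g / c) = g ^ (L + 1) / (fact (L - 1) * c) * exp (- g)"
    using normalized_throughput_at_root[OF g(3)[unfolded L]] T[of "g / c"] unfolding gc L by simp
  moreover have "\<forall>t>0. Qpoly L t = 0 \<longrightarrow> t = g"
    using Qpoly_positive_root_unique[OF \<open>g > 0\<close>] g(3) unfolding L by blast
  ultimately show ?thesis
    using \<open>g > 0\<close> g unfolding Let_def c_def mult.assoc by blast
qed

end
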